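(* Let $\{(\mathbf{x}^k,\mathbf{r}^k,\boldsymbol{\lambda}^k)\}$ be generated by Algorithm 1. If $0<\rho\le\frac{\beta}{m}$ and $\mathbf{P}_i\succeq L_i\mathbf{I}+\beta\mathbf{A}_i^\top\mathbf{A}_i$ for all $i=1,\ldots,m$, then $F(\mathbf{x}^k)\to F(\mathbf{x}^* )$ in probability and $\|\mathbf{r}^k\|\to0$ in probability, where $\mathbf{x}^*$ is as in the solution-existence assumption.
   Context: Problem: $\min_{\mathbf{x}} F(\mathbf{x}):=f(\mathbf{x})+g(\mathbf{x})$ s.t. $\mathbf{A}\mathbf{x}=\mathbf{b}$, where $\mathbf{x}=(\mathbf{x}_1;\ldots;\mathbf{x}_m)$ with blocks $\mathbf{x}_i\in\mathbb{R}^{n_i}$, $g(\mathbf{x})=\sum_{i=1}^m g_i(\mathbf{x}_i)$, $\mathbf{A}=[\mathbf{A}_1,\ldots,\mathbf{A}_m]$ with $\mathbf{A}_i\in\mathbb{R}^{q\times n_i}$, $\mathbf{b}\in\mathbb{R}^q$; $f$ is convex and continuously differentiable, each $g_i$ is proper, convex, lower semicontinuous. Define $\Phi(\bar{\mathbf{x}},\mathbf{x},\boldsymbol{\lambda})=F(\bar{\mathbf{x}})-F(\mathbf{x})-\langle\boldsymbol{\lambda},\mathbf{A}\bar{\mathbf{x}}-\mathbf{b}\rangle$. $\mathbf{U}_i\mathbf{y}$ denotes the vector whose $i$-th block is $\mathbf{y}_i$ and other blocks zero. Assumption (existence of a solution): there is $(\mathbf{x}^*,\boldsymbol{\lambda}^*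 )$ with $\mathbf{A}\mathbf{x}^*=\mathbf{b}$ and $\Phi(\mathbf{x},\mathbf{x}^*,\boldsymbol{\lambda}^* )\ge0$ for all $\mathbf{x}$. Assumption (gradient Lipschitz continuity): there are constants $L_i>0$ and $L_r$ with $\|\nabla_i f(\mathbf{x}+\mathbf{U}_i\mathbf{y})-\nabla_i f(\mathbf{x})\|\le L_i\|\mathbf{y}_i\|$ and $\|\nabla f(\mathbf{x}+\mathbf{U}_i\mathbf{y})-\nabla f(\mathbf{x})\|\le L_r\|\mathbf{y}_i\|$ for all $i,\mathbf{x},\mathbf{y}$. Algorithm 1 (randomized primal-dual block update): choose $\mathbf{x}^0$, set $\boldsymbol{\lambda}^0=\mathbf{0}$, $\mathbf{r}^0=\mathbf{A}\mathbf{x}^0-\mathbf{b}$, parameters $\beta>0,\rho>0$, symmetric PSD matrices $\mathbf{P}_i$. For $k=0,1,\ldots$: pick $i_k\in\{1,\ldots,m\}$ uniformly at random, independent of $i_0,\ldots,i_{k-1}$; set $\mathbf{x}_i^{k+1}=\mathbf{x}_i^k$ for $i\ne i_k$ and $$\mathbf{x}_{i_k}^{k+1}\in\arg\min_{\mathbf{x}_{i_k}}\big\langle\nabla_{i_k} f(\mathbf{x}^k)-\mathbf{A}_{i_k}^\top(\boldsymbol{\lambda}^k-\beta\mathbf{r}^k),\mathbf{x}_{i_k}\big\rangle+g_{i_k}(\mathbf{x}_{i_k})+\tfrac12\|\mathbf{x}_{i_k}-\mathbf{x}_{i_k}^k\|_{\mathbf{P}_{i_k}}^2$$ (with $\|\mathbf{z}\|_{\mathbf{M}}^2=\mathbf{z}^\top\mathbf{M}\mathbf{z}$);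 then $\mathbf{r}^{k+1}=\mathbf{r}^k+\mathbf{A}_{i_k}(\mathbf{x}_{i_k}^{k+1}-\mathbf{x}_{i_k}^k)$ (so $\mathbf{r}^k=\mathbf{A}\mathbf{x}^k-\mathbf{b}$) and $\boldsymbol{\lambda}^{k+1}=\boldsymbol{\lambda}^k-\rho\mathbf{r}^{k+1}$. *)

theory Defs
  imports "HOL-Analysis.Analysis" "HOL-Probability.Probability"
begin

text \<open>Vectors x in R^n are modelled as real^'n; the coordinates are partitioned into
  blocks 0..<m by a map blk :: 'n => nat.  U i y keeps the i-th block of y and zeroes
  the rest (the operator U_i of the paper, composed with block extraction).\<close>

definition blockU :: "('n::finite \<Rightarrow> nat) \<Rightarrow> nat \<Rightarrow> real^'n \<Rightarrow> real^'n" where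
  "blockU blk i y = (\<chi> j. if blk j = i then y $ j else 0)"

text \<open>Extended-real valued convexity (with the convention 0 * \<infinity> = 0).\<close>
definition ereal_convex :: "('a::real_vector \<Rightarrow> ereal) \<Rightarrow> bool" where
  "ereal_convex g \<longleftrightarrow> (\<forall>x y t. 0 \<le> t \<and> t \<le> 1 \<longrightarrow>
      g ((1 - t) *\<^sub>R x + t *\<^sub>R y) \<le> ereal (1 - t) * g x + ereal t * g y)"

definition ereal_proper :: "('a \<Rightarrow> ereal) \<Rightarrow> bool" where
  "ereal_proper g \<longleftrightarrow> (\<forall>x. g x \<noteq> -\<infinity>) \<and> (\<exists>x. g x \<noteq> \<infinity>)"

definition ereal_lsc :: "('a::topological_space \<Rightarrow> ereal) \<Rightarrow> bool" where
  "ereal_lsc g \<longleftrightarrow> (\<forall>c. closed {x. g x \<le> c})"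

definition objF :: "nat \<Rightarrow> ('a \<Rightarrow> real) \<Rightarrow> (nat \<Rightarrow> 'a \<Rightarrow> ereal) \<Rightarrow> 'a \<Rightarrow> ereal" where
  "objF m f g x = ereal (f x) + (\<Sum>i<m. g i x)"

end

theory Submission
  imports Defs
begin

text \<open>The x-update is a block proximal linearised step on the augmented Lagrangian. The descent
  lemma for f, the optimality condition of the block subproblem tested against x*, convexity of f
  and the bound P i \<ge> L i I + \<beta> A_i^T A_i show that, averaged over the uniformly chosen block,
  the Lyapunov function
    V = (F x - F x* - \<langle>\<lambda>*, r\<rangle>) + 1/2 \<Sum>i \<parallel>x_i - x*_i\<parallel>_{P_i}^2
        + c_res \<parallel>r\<parallel>^2 + c_dual \<parallel>\<lambda> - \<lambda>*\<parallel>^2 - c_cross \<langle>\<lambda> - \<lambda>*, r\<rangle>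
  decreases by at least D = (F x - F x* - \<langle>\<lambda>*, r\<rangle>) / m + c_dec \<parallel>r\<parallel>^2, where c_dec > 0 and V \<ge> 0
  precisely because \<rho> \<le> \<beta> / m. Hence \<Sum>k E[D_k] < \<infinity>, and a Markov-type bound turns
  E[D_k] \<rightarrow> 0 into convergence in probability of \<parallel>r^k\<parallel> and of F(x^k), since
  \<bar>F x - F x*\<bar> \<le> gap + \<parallel>\<lambda>*\<parallel> \<parallel>r\<parallel>.
  As the blocks are drawn independently and uniformly, the law of the first k iterates is the
  uniform average over index sequences of length k, so all expectations are finite averages.\<close>

section \<open>Block projections\<close>

lemma blockU_nth [simp]: "blockU blk i y $ j = (if blk j = i then y $ j else 0)"
  by (simp add: blockU_def)

lemma blockU_idem [simp]: "blockU blk i (blockU blk i y) = blockU blk i y"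
  by (simp add: vec_eq_iff)

lemma blockU_add: "blockU blk i (a + b) = blockU blk i a + blockU blk i b"
  by (simp add: vec_eq_iff)

lemma blockU_diff: "blockU blk i (a - b) = blockU blk i a - blockU blk i b"
  by (simp add: vec_eq_iff)

lemma blockU_scaleR: "blockU blk i (c *\<^sub>R a) = c *\<^sub>R blockU blk i a"
  by (simp add: vec_eq_iff)

lemma inner_blockU_commute: "blockU blk i a \<bullet> b = a \<bullet> blockU blk i b"
  by (simp add: inner_vec_def) (rule sum.cong, auto)

lemma sum_blockU:
  assumes "\<forall>j. blk j < m"
  shows "(\<Sum>i<m. blockU blk i y) = y"
proof -
  have "(\<Sum>i<m. blockU blk i y) $ j = y $ j" for j
    using assms by simp
  then show ?thesis by (simp add: vec_eq_iff)
qed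

lemma inner_matrix_vector_transpose: "(a::real^'m) \<bullet> (M *v h) = (transpose M *v a) \<bullet> (h::real^'n)"
  by (metis dot_lmul_matrix transpose_transpose vector_transpose_matrix)

lemma sum_diff_single_change:
  fixes h1 h2 :: "nat \<Rightarrow> real"
  assumes "i < m" and "\<And>j. j < m \<Longrightarrow> j \<noteq> i \<Longrightarrow> h1 j = h2 j"
  shows "(\<Sum>j<m. h1 j) - (\<Sum>j<m. h2 j) = h1 i - h2 i"
proof -
  have "(\<Sum>j\<in>{..<m}-{i}. h1 j) = (\<Sum>j\<in>{..<m}-{i}. h2 j)"
    using assms by (intro sum.cong) auto
  then show ?thesis
    using assms(1) by (simp add: sum.remove)
qed

section \<open>Smooth convex functions\<close>

lemma has_real_derivative_along_line:
  fixes f :: "'a::real_inner \<Rightarrow> real"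
  assumes grad: "\<And>z. (f has_derivative (\<lambda>h. gf z \<bullet> h)) (at z)"
  shows "((\<lambda>t. f (x + t *\<^sub>R d)) has_real_derivative (gf (x + t *\<^sub>R d) \<bullet> d)) (at t)"
proof -
  have "((\<lambda>t. x + t *\<^sub>R d) has_derivative (\<lambda>s. s *\<^sub>R d)) (at t)"
    by (auto intro!: derivative_eq_intros)
  from has_derivative_compose[OF this grad] show ?thesis
    by (simp add: has_field_derivative_def mult.commute[of _ "gf (x + t *\<^sub>R d) \<bullet> d"])
qed

lemma convex_gradient_inequality:
  fixes f :: "'a::real_inner \<Rightarrow> real"
  assumes conv: "convex_on UNIV f" and grad: "\<And>z. (f has_derivative (\<lambda>h. gf z \<bullet> h)) (at z)"
  shows "f x + gf x \<bullet> (y - x) \<le> f y"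
proof -
  define h where "h = y - x"
  define \<phi> where "\<phi> t = f (x + t *\<^sub>R h)" for t :: real
  have "convex_on UNIV \<phi>"
  proof (rule convex_onI)
    fix t u v :: real assume t: "0 < t" "t < 1"
    have "x + ((1 - t) * u + t * v) *\<^sub>R h = (1 - t) *\<^sub>R (x + u *\<^sub>R h) + t *\<^sub>R (x + v *\<^sub>R h)"
      by (simp add: algebra_simps)
    then show "\<phi> ((1 - t) *\<^sub>R u + t *\<^sub>R v) \<le> (1 - t) * \<phi> u + t * \<phi> v"
      using convex_onD[OF conv, of t "x + u *\<^sub>R h" "x + v *\<^sub>R h"] t by (simp add: \<phi>_def)
  qed auto
  moreover have "(\<phi> has_field_derivative (gf x \<bullet> h)) (at 0)"
    using has_real_derivative_along_line[OF grad, of x h 0] by (simp add: \<phi>_def[abs_def])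
  ultimately have "(gf x \<bullet> h) * (1 - 0) \<le> \<phi> 1 - \<phi> 0"
    by (intro convex_on_imp_above_tangent) auto
  then show ?thesis by (simp add: \<phi>_def h_def)
qed

lemma descent_lemma:
  fixes f :: "'a::real_inner \<Rightarrow> real"
  assumes grad: "\<And>z. (f has_derivative (\<lambda>h. gf z \<bullet> h)) (at z)"
    and lip: "\<And>t. 0 \<le> t \<Longrightarrow> t \<le> 1 \<Longrightarrow> (gf (x + t *\<^sub>R d) - gf x) \<bullet> d \<le> L * t * (norm d)\<^sup>2"
  shows "f (x + d) \<le> f x + gf x \<bullet> d + L / 2 * (norm d)\<^sup>2"
proof -
  define \<phi> where "\<phi> t = f (x + t *\<^sub>R d) - t * (gf x \<bullet> d) - L / 2 * t\<^sup>2 * (norm d)\<^sup>2" for t :: real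
  have "\<phi> 1 \<le> \<phi> 0"
  proof (rule DERIV_nonpos_imp_nonincreasing[where f = \<phi>])
    fix t :: real assume t: "0 \<le> t" "t \<le> 1"
    have "(\<phi> has_real_derivative
        (gf (x + t *\<^sub>R d) - gf x) \<bullet> d - L * t * (norm d)\<^sup>2) (at t)"
      unfolding \<phi>_def
      by (auto intro!: derivative_eq_intros has_real_derivative_along_line[OF grad]
          simp: inner_diff_left)
    then show "\<exists>y. (\<phi> has_real_derivative y) (at t) \<and> y \<le> 0"
      using lip[OF t] by auto
  qed simp
  then show ?thesis by (simp add: \<phi>_def)
qed

section \<open>The block subproblem\<close>

lemma nonneg_if_nonneg_add_small:
  fixes S H :: real
  assumes "H \<ge> 0" and "\<And>t. 0 < t \<Longrightarrow> t \<le> 1 \<Longrightarrow> 0 \<le> S + t * H"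
  shows "0 \<le> S"
proof (rule ccontr)
  assume "\<not> 0 \<le> S"
  define t where "t = min 1 (- S / (H + 1))"
  have t: "0 < t" "t \<le> 1" using \<open>\<not> 0 \<le> S\<close> assms(1) by (auto simp: t_def divide_neg_pos)
  have "t * H \<le> (- S / (H + 1)) * H" using assms(1) by (intro mult_right_mono) (auto simp: t_def)
  also have "\<dots> < - S" using \<open>\<not> 0 \<le> S\<close> assms(1) by (simp add: field_simps)
  finally show False using assms(2)[OF t] by simp
qed

locale block_primal_dual =
  fixes m :: nat and blk :: "'n::finite \<Rightarrow> nat"
    and f :: "real^'n \<Rightarrow> real" and gf :: "real^'n \<Rightarrow> real^'n"
    and g :: "nat \<Rightarrow> real^'n \<Rightarrow> ereal"
    and A :: "real^'n^'q::finite" and b :: "real^'q"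
    and L :: "nat \<Rightarrow> real" and \<beta> \<rho> :: real and P :: "nat \<Rightarrow> real^'n^'n"
    and xs :: "real^'n" and lams :: "real^'q"
  assumes blk_range: "\<forall>j. blk j < m"
    and f_convex: "convex_on UNIV f"
    and f_grad: "\<forall>z. (f has_derivative (\<lambda>h. gf z \<bullet> h)) (at z)"
    and g_block: "\<forall>i<m. \<forall>z. g i z = g i (blockU blk i z)"
    and g_proper: "\<forall>i<m. ereal_proper (g i)"
    and g_convex: "\<forall>i<m. ereal_convex (g i)"
    and sol_feas: "A *v xs = b"
    and sol_opt: "\<forall>z. objF m f g xs + ereal (lams \<bullet> (A *v z - b)) \<le> objF m f g z"
    and L_pos: "\<forall>i<m. L i > 0"
    and Lip_i: "\<forall>i<m. \<forall>z y. norm (blockU blk i (gf (z + blockU blk i y)) - blockU blk i (gf z))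
                  \<le> L i * norm (blockU blk i y)"
    and beta_pos: "\<beta> > 0"
    and rho_pos: "0 < \<rho>" and rho_le: "\<rho> \<le> \<beta> / real m"
    and P_sym: "\<forall>i<m. transpose (P i) = P i"
    and P_psd: "\<forall>i<m. \<forall>y. 0 \<le> y \<bullet> (P i *v y)"
    and P_ge: "\<forall>i<m. \<forall>y. blockU blk i y = y \<longrightarrow>
                 L i * (y \<bullet> y) + \<beta> * (norm (A *v y))\<^sup>2 \<le> y \<bullet> (P i *v y)"
begin

abbreviation U where "U \<equiv> blockU blk"

lemma m_pos: "m > 0"
  using blk_range by (metis gr_zeroI not_less0)

lemma P_inner_commute: "i < m \<Longrightarrow> a \<bullet> (P i *v h) = h \<bullet> (P i *v a)"
  using P_sym by (metis inner_commute inner_matrix_vector_transpose)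

lemma P_quad_add:
  assumes "i < m"
  shows "(a + t *\<^sub>R h) \<bullet> (P i *v (a + t *\<^sub>R h))
       = a \<bullet> (P i *v a) + 2 * t * (h \<bullet> (P i *v a)) + t\<^sup>2 * (h \<bullet> (P i *v h))"
  using P_inner_commute[OF assms, of a h]
  by (simp add: power2_eq_square algebra_simps)

lemma descent_block:
  assumes i: "i < m" and d: "U i d = d"
  shows "f (x + d) \<le> f x + gf x \<bullet> d + L i / 2 * (norm d)\<^sup>2"
proof (rule descent_lemma)
  show "(f has_derivative (\<lambda>h. gf z \<bullet> h)) (at z)" for z
    using f_grad by blast
  fix t :: real assume t: "0 \<le> t" "t \<le> 1"
  have "(gf (x + t *\<^sub>R d) - gf x) \<bullet> d = (U i (gf (x + U i (t *\<^sub>R d))) - U i (gf x)) \<bullet> d"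
    using d by (metis inner_blockU_commute blockU_scaleR inner_diff_left)
  also have "\<dots> \<le> norm (U i (gf (x + U i (t *\<^sub>R d))) - U i (gf x)) * norm d"
    by (rule norm_cauchy_schwarz)
  also have "\<dots> \<le> L i * norm (U i (t *\<^sub>R d)) * norm d"
    using Lip_i i by (intro mult_right_mono) auto
  also have "\<dots> = L i * t * (norm d)\<^sup>2"
    using d t by (simp add: blockU_scaleR power2_eq_square)
  finally show "(gf (x + t *\<^sub>R d) - gf x) \<bullet> d \<le> L i * t * (norm d)\<^sup>2" .
qed

lemma g_not_minf: "i < m \<Longrightarrow> g i v \<noteq> -\<infinity>"
  using g_proper by (auto simp: ereal_proper_def)

lemma g_blockU: "i < m \<Longrightarrow> g i (U i z) = g i z"
  using g_block by metis

lemma ex_block_g_finite: "i < m \<Longrightarrow> \<exists>z. U i z = z \<and> g i z \<noteq> \<infinity>"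
  using g_proper g_blockU by (auto simp: ereal_proper_def) (metis blockU_idem)

definition res :: "real^'n \<Rightarrow> real^'q" where
  "res x = A *v x - b"

definition lin_coef :: "nat \<Rightarrow> real^'n \<Rightarrow> real^'q \<Rightarrow> real^'n" where
  "lin_coef i x lam = U i (gf x - transpose A *v (lam - \<beta> *\<^sub>R res x))"

definition prox_obj :: "nat \<Rightarrow> real^'n \<Rightarrow> real^'q \<Rightarrow> real^'n \<Rightarrow> ereal" where
  "prox_obj i x lam v = ereal (lin_coef i x lam \<bullet> v) + g i v
     + ereal (1/2 * ((v - U i x) \<bullet> (P i *v (v - U i x))))"

text \<open>The x-update of Algorithm 1 as a relation, since the proximal subproblem need not have a
  minimiser in general.\<close>

definition is_block_update :: "real^'n \<Rightarrow> real^'q \<Rightarrow> nat \<Rightarrow> real^'n \<Rightarrow> bool" where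
  "is_block_update x lam i x' \<longleftrightarrow> (\<forall>j. blk j \<noteq> i \<longrightarrow> x' $ j = x $ j)
     \<and> (\<forall>z. U i z = z \<longrightarrow> prox_obj i x lam (U i x') \<le> prox_obj i x lam z)"

lemma block_update_other: "is_block_update x lam i x' \<Longrightarrow> j \<noteq> i \<Longrightarrow> U j x' = U j x"
  by (auto simp: is_block_update_def vec_eq_iff)

lemma block_update_diff_blockU: "is_block_update x lam i x' \<Longrightarrow> U i (x' - x) = x' - x"
  by (auto simp: is_block_update_def vec_eq_iff)

lemma block_update_g_finite:
  assumes i: "i < m" and upd: "is_block_update x lam i x'"
  shows "g i x' \<noteq> \<infinity>"
proof
  assume inf: "g i x' = \<infinity>"
  obtain z where z: "U i z = z" "g i z \<noteq> \<infinity>" using ex_block_g_finite i by blast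
  have "prox_obj i x lam (U i x') \<le> prox_obj i x lam z" using upd z by (auto simp: is_block_update_def)
  moreover have "prox_obj i x lam (U i x') = \<infinity>" using inf g_blockU[OF i] by (simp add: prox_obj_def)
  moreover have "prox_obj i x lam z \<noteq> \<infinity>" using z g_not_minf[OF i] by (simp add: prox_obj_def)
  ultimately show False by simp
qed

text \<open>First-order optimality of the block subproblem, obtained by comparing the minimiser
  with the points of the segment towards z and letting the step tend to zero.\<close>

lemma block_update_variational_ineq:
  assumes i: "i < m" and upd: "is_block_update x lam i x'" and z: "U i z = z" and gz: "g i z \<noteq> \<infinity>"
  shows "real_of_ereal (g i x') - real_of_ereal (g i z)
     \<le> lin_coef i x lam \<bullet> (z - U i x') + (z - U i x') \<bullet> (P i *v (U i x' - U i x))"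
proof -
  define v where "v = U i x'"
  define w where "w = U i x"
  define c where "c = lin_coef i x lam"
  define G0 where "G0 = real_of_ereal (g i v)"
  define G1 where "G1 = real_of_ereal (g i z)"
  define h where "h = z - v"
  define H where "H = h \<bullet> (P i *v h)"
  define S where "S = c \<bullet> h + G1 - G0 + h \<bullet> (P i *v (v - w))"
  have gv: "g i v = ereal G0" using block_update_g_finite[OF i upd] g_not_minf[OF i] g_blockU[OF i]
    by (cases "g i v") (auto simp: G0_def v_def)
  have gz': "g i z = ereal G1" using gz g_not_minf[OF i] by (cases "g i z") (auto simp: G1_def)
  have Hnn: "H \<ge> 0" using P_psd i by (simp add: H_def)
  have segment: "0 \<le> S + t * (H / 2)" if t: "0 < t" "t \<le> 1" for t
  proof -
    define zt where "zt = (1 - t) *\<^sub>R v + t *\<^sub>R z"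
    have Uzt: "U i zt = zt" using z by (simp add: zt_def blockU_add blockU_scaleR v_def)
    have "g i zt \<le> ereal (1 - t) * g i v + ereal t * g i z"
      using g_convex i t by (auto simp: ereal_convex_def zt_def)
    then have "g i zt \<le> ereal ((1 - t) * G0 + t * G1)" using gv gz' by simp
    then have "prox_obj i x lam zt
        \<le> ereal (c \<bullet> zt) + ereal ((1 - t) * G0 + t * G1) + ereal (1/2 * ((zt - w) \<bullet> (P i *v (zt - w))))"
      unfolding prox_obj_def c_def[symmetric] w_def[symmetric] by (intro add_mono order_refl)
    moreover have "prox_obj i x lam v \<le> prox_obj i x lam zt"
      using upd Uzt by (auto simp: is_block_update_def v_def)
    moreover have "prox_obj i x lam v = ereal (c \<bullet> v) + ereal G0 + ereal (1/2 * ((v - w) \<bullet> (P i *v (v - w))))"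
      unfolding prox_obj_def c_def[symmetric] w_def[symmetric] gv ..
    ultimately have "ereal (c \<bullet> v) + ereal G0 + ereal (1/2 * ((v - w) \<bullet> (P i *v (v - w))))
       \<le> ereal (c \<bullet> zt) + ereal ((1 - t) * G0 + t * G1) + ereal (1/2 * ((zt - w) \<bullet> (P i *v (zt - w))))"
      by order
    then have ineq: "c \<bullet> v + G0 + 1/2 * ((v - w) \<bullet> (P i *v (v - w)))
       \<le> c \<bullet> zt + ((1 - t) * G0 + t * G1) + 1/2 * ((zt - w) \<bullet> (P i *v (zt - w)))"
      by simp
    have zt_w: "zt - w = (v - w) + t *\<^sub>R h" by (simp add: zt_def h_def algebra_simps)
    have "(zt - w) \<bullet> (P i *v (zt - w))
        = (v - w) \<bullet> (P i *v (v - w)) + 2 * t * (h \<bullet> (P i *v (v - w))) + t\<^sup>2 * H"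
      unfolding zt_w H_def by (rule P_quad_add[OF i])
    moreover have "c \<bullet> zt = c \<bullet> v + t * (c \<bullet> h)"
      by (simp add: zt_def h_def algebra_simps)
    ultimately have "0 \<le> t * S + t\<^sup>2 / 2 * H"
      using ineq by (simp add: S_def algebra_simps)
    then have "0 \<le> t * (S + t * (H / 2))" by (simp add: algebra_simps power2_eq_square)
    then show ?thesis using t by (simp add: zero_le_mult_iff)
  qed
  have "S \<ge> 0"
    using Hnn by (intro nonneg_if_nonneg_add_small[OF _ segment]) simp_all
  then show ?thesis
    by (simp add: S_def G0_def G1_def h_def v_def w_def c_def g_blockU[OF i])
qed

lemma block_update_unique:
  assumes i: "i < m" and upd1: "is_block_update x lam i x1" and upd2: "is_block_update x lam i x2"
  shows "x1 = x2"
proof -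
  define v1 where "v1 = U i x1"
  define v2 where "v2 = U i x2"
  have g1: "g i x1 = g i v1" and g2: "g i x2 = g i v2"
    using g_blockU[OF i] by (auto simp: v1_def v2_def)
  have "g i v1 \<noteq> \<infinity>" "g i v2 \<noteq> \<infinity>"
    using block_update_g_finite[OF i upd1] block_update_g_finite[OF i upd2] g1 g2 by auto
  then have "real_of_ereal (g i v1) - real_of_ereal (g i v2)
       \<le> lin_coef i x lam \<bullet> (v2 - v1) + (v2 - v1) \<bullet> (P i *v (v1 - U i x))"
    and "real_of_ereal (g i v2) - real_of_ereal (g i v1)
       \<le> lin_coef i x lam \<bullet> (v1 - v2) + (v1 - v2) \<bullet> (P i *v (v2 - U i x))"
    using block_update_variational_ineq[OF i upd1, of v2] block_update_variational_ineq[OF i upd2, of v1]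
    by (simp_all add: g1 g2 v1_def v2_def)
  then have "0 \<le> (v2 - v1) \<bullet> (P i *v (v1 - U i x)) + (v1 - v2) \<bullet> (P i *v (v2 - U i x))"
    by (simp add: inner_diff_right)
  also have "\<dots> = - ((v1 - v2) \<bullet> (P i *v (v1 - v2)))"
    by (simp add: algebra_simps)
  finally have "(v1 - v2) \<bullet> (P i *v (v1 - v2)) \<le> 0" by simp
  moreover have "L i * ((v1 - v2) \<bullet> (v1 - v2)) \<le> (v1 - v2) \<bullet> (P i *v (v1 - v2))"
    using P_ge i beta_pos by (smt (verit) blockU_diff blockU_idem v1_def v2_def zero_le_power2 mult_nonneg_nonneg)
  ultimately have "(v1 - v2) \<bullet> (v1 - v2) \<le> 0"
    using L_pos i by (smt (verit) mult_pos_pos inner_ge_zero)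
  then have "v1 = v2" by (metis inner_eq_zero_iff order_antisym inner_ge_zero eq_iff_diff_eq_0)
  then show ?thesis using upd1 upd2
    by (auto simp: is_block_update_def vec_eq_iff v1_def v2_def) metis
qed

definition g_val :: "nat \<Rightarrow> real^'n \<Rightarrow> real" where
  "g_val i x = real_of_ereal (g i x)"

definition in_dom :: "real^'n \<Rightarrow> bool" where
  "in_dom x \<longleftrightarrow> (\<forall>i<m. g i x \<noteq> \<infinity>)"

definition F_val :: "real^'n \<Rightarrow> real" where
  "F_val x = f x + (\<Sum>i<m. g_val i x)"

definition prox_dist :: "real^'n \<Rightarrow> real" where
  "prox_dist x = (\<Sum>j<m. U j (x - xs) \<bullet> (P j *v U j (x - xs)))"

definition lagr_gap :: "real^'n \<Rightarrow> real" where
  "lagr_gap x = F_val x - F_val xs - lams \<bullet> res x"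

lemma g_eq_ereal_g_val: "i < m \<Longrightarrow> g i x \<noteq> \<infinity> \<Longrightarrow> g i x = ereal (g_val i x)"
  using g_not_minf by (cases "g i x") (auto simp: g_val_def)

lemma objF_in_dom: "in_dom x \<Longrightarrow> objF m f g x = ereal (F_val x)"
proof -
  assume "in_dom x"
  then have "(\<Sum>i<m. g i x) = (\<Sum>i<m. ereal (g_val i x))"
    using g_eq_ereal_g_val by (auto simp: in_dom_def)
  then show ?thesis by (simp add: objF_def F_val_def)
qed

lemma objF_not_in_dom: "\<not> in_dom x \<Longrightarrow> objF m f g x = \<infinity>"
  by (auto simp: objF_def in_dom_def sum_Pinfty)

lemma in_dom_solution: "in_dom xs"
proof -
  obtain zb where zb: "\<And>i. i < m \<Longrightarrow> U i (zb i) = zb i \<and> g i (zb i) \<noteq> \<infinity>"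
    using ex_block_g_finite by metis
  define z where "z = (\<chi> j. zb (blk j) $ j)"
  have "U i z = U i (zb i)" for i
    by (simp add: vec_eq_iff z_def)
  then have "in_dom z" using zb g_blockU by (auto simp: in_dom_def) (metis)
  then have "objF m f g xs \<noteq> \<infinity>"
    using sol_opt[rule_format, of z] by (auto simp: objF_in_dom)
  then show ?thesis using objF_not_in_dom by blast
qed

lemma lagr_gap_nonneg: "in_dom x \<Longrightarrow> lagr_gap x \<ge> 0"
  using sol_opt[rule_format, of x] objF_in_dom[of x] objF_in_dom[OF in_dom_solution]
  by (simp add: lagr_gap_def res_def)

lemma prox_dist_nonneg: "prox_dist x \<ge> 0"
  unfolding prox_dist_def using P_psd by (intro sum_nonneg) auto

lemma block_update_in_dom:
  assumes "in_dom x" "i < m" "is_block_update x lam i x'"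
  shows "in_dom x'"
  using assms block_update_g_finite block_update_other g_blockU unfolding in_dom_def by metis

lemma prox_dist_block_change:
  assumes i: "i < m" and other: "\<And>j. j \<noteq> i \<Longrightarrow> U j x' = U j x"
  shows "(U i xs - U i x') \<bullet> (P i *v (U i x' - U i x))
       = (prox_dist x - prox_dist x') / 2 - (U i x' - U i x) \<bullet> (P i *v (U i x' - U i x)) / 2"
proof -
  define w where "w = U i x"
  define v where "v = U i x'"
  define z where "z = U i xs"
  have "prox_dist x - prox_dist x'
      = U i (x - xs) \<bullet> (P i *v U i (x - xs)) - U i (x' - xs) \<bullet> (P i *v U i (x' - xs))"
    unfolding prox_dist_def by (rule sum_diff_single_change[OF i]) (simp add: blockU_diff other)
  then have "prox_dist x - prox_dist x' = (w - z) \<bullet> (P i *v (w - z)) - (v - z) \<bullet> (P i *v (v - z))"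
    by (simp add: blockU_diff w_def v_def z_def)
  moreover have "w \<bullet> (P i *v v) = v \<bullet> (P i *v w)" "z \<bullet> (P i *v v) = v \<bullet> (P i *v z)"
    "z \<bullet> (P i *v w) = w \<bullet> (P i *v z)" using P_inner_commute[OF i] by blast+
  ultimately show ?thesis
    unfolding w_def[symmetric] v_def[symmetric] z_def[symmetric]
    by (simp add: algebra_simps) (simp add: field_simps)
qed

text \<open>Combines the descent lemma for f, the optimality of the block subproblem tested against x*
  and the bound on P i.\<close>

lemma F_val_block_update:
  assumes i: "i < m" and upd: "is_block_update x lam i x'"
  shows "F_val x' \<le> F_val x + (gf x \<bullet> U i (xs - x) + g_val i xs - g_val i x)
     + (lam - \<beta> *\<^sub>R res x) \<bullet> (A *v U i (x - xs)) + (lam - \<beta> *\<^sub>R res x) \<bullet> (res x' - res x)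
     + (prox_dist x - prox_dist x') / 2 - \<beta> / 2 * (norm (res x' - res x))\<^sup>2"
proof -
  define d where "d = x' - x"
  define w where "w = U i x"
  define v where "v = U i x'"
  define z where "z = U i xs"
  define u where "u = lam - \<beta> *\<^sub>R res x"
  have Ud: "U i d = d" using block_update_diff_blockU[OF upd] by (simp add: d_def)
  have dvw: "d = v - w" using Ud by (simp add: d_def v_def w_def blockU_diff)
  have rd: "res x' - res x = A *v d" by (simp add: res_def d_def matrix_vector_mult_diff_distrib)
  have gz: "g i z \<noteq> \<infinity>" using in_dom_solution i g_blockU by (auto simp: in_dom_def z_def)
  have desc: "f x' \<le> f x + gf x \<bullet> d + L i * (d \<bullet> d) / 2"
    using descent_block[OF i Ud, of x] by (simp add: d_def power2_norm_eq_inner)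
  have opt: "g_val i x' - g_val i xs \<le> lin_coef i x lam \<bullet> (z - v) + (z - v) \<bullet> (P i *v (v - w))"
    using block_update_variational_ineq[OF i upd _ gz] g_blockU[OF i]
    by (simp add: g_val_def z_def v_def w_def)
  have F_diff: "F_val x' - F_val x = f x' - f x + (g_val i x' - g_val i x)"
  proof -
    have "(\<Sum>j<m. g_val j x') - (\<Sum>j<m. g_val j x) = g_val i x' - g_val i x"
      by (rule sum_diff_single_change[OF i]) (metis block_update_other[OF upd] g_blockU g_val_def)
    then show ?thesis by (simp add: F_val_def)
  qed
  have lin: "lin_coef i x lam \<bullet> (z - v) = gf x \<bullet> (z - v) - u \<bullet> (A *v (z - v))"
  proof -
    have "lin_coef i x lam \<bullet> (z - v) = (gf x - transpose A *v u) \<bullet> (z - v)"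
      unfolding lin_coef_def u_def inner_blockU_commute by (simp add: z_def v_def blockU_diff)
    then show ?thesis by (simp add: inner_diff_left inner_matrix_vector_transpose)
  qed
  have "z - v = - d - U i (x - xs)" by (simp add: dvw blockU_diff w_def z_def)
  then have res_step: "u \<bullet> (A *v (z - v)) = - (u \<bullet> (res x' - res x)) - u \<bullet> (A *v U i (x - xs))"
    by (simp add: rd matrix_vector_mult_diff_distrib inner_diff_right linear_neg[OF matrix_vector_mul_linear])
  have prox: "(z - v) \<bullet> (P i *v (v - w)) = (prox_dist x - prox_dist x') / 2 - d \<bullet> (P i *v d) / 2"
    using prox_dist_block_change[OF i block_update_other[OF upd]] by (simp add: dvw z_def v_def w_def)
  have lin_x: "gf x \<bullet> d + gf x \<bullet> (z - v) = gf x \<bullet> U i (xs - x)"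
    by (simp add: dvw blockU_diff w_def z_def inner_diff_right)
  have "L i * (d \<bullet> d) + \<beta> * (norm (res x' - res x))\<^sup>2 \<le> d \<bullet> (P i *v d)"
    using P_ge i Ud rd by auto
  then show ?thesis
    unfolding u_def[symmetric] using F_diff desc opt lin res_step prox lin_x by linarith
qed

end

section \<open>The Lyapunov function\<close>

text \<open>The algebraic identity behind the dual part of the Lyapunov function; t, r and u
  play the roles of the new residual, the old residual and the dual error.\<close>

lemma lyapunov_dual_identity:
  fixes u r t :: "'a::real_inner"
  assumes "1 - 2 * a * \<rho> - c = 0" and "- \<beta> / 2 + \<kappa> + a * \<rho>\<^sup>2 + c * \<rho> = 0"
  shows "(u - \<beta> *\<^sub>R r) \<bullet> (t - r) - \<beta> / 2 * (norm (t - r))\<^sup>2 + \<kappa> * (norm t)\<^sup>2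
        + a * (norm (u - \<rho> *\<^sub>R t))\<^sup>2 - c * ((u - \<rho> *\<^sub>R t) \<bullet> t)
       = - (u \<bullet> r) + \<beta> / 2 * (norm r)\<^sup>2 + a * (norm u)\<^sup>2"
proof -
  have "(u - \<beta> *\<^sub>R r) \<bullet> (t - r) - \<beta> / 2 * (norm (t - r))\<^sup>2 + \<kappa> * (norm t)\<^sup>2
        + a * (norm (u - \<rho> *\<^sub>R t))\<^sup>2 - c * ((u - \<rho> *\<^sub>R t) \<bullet> t)
       - (- (u \<bullet> r) + \<beta> / 2 * (norm r)\<^sup>2 + a * (norm u)\<^sup>2)
     = (t \<bullet> u) * (1 - 2 * a * \<rho> - c) + (t \<bullet> t) * (- \<beta> / 2 + \<kappa> + a * \<rho>\<^sup>2 + c * \<rho>)"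
    unfolding power2_norm_eq_inner
    by (simp add: inner_commute[of r t]
        inner_commute[of r u] inner_commute[of u t] algebra_simps power2_eq_square)
  then show ?thesis using assms by simp
qed

context block_primal_dual begin

definition "c_res = \<beta> / 2 - \<rho> + \<rho> / (2 * real m)"
definition "c_dual = 1 / (2 * real m * \<rho>)"
definition "c_cross = 1 - 1 / real m"
definition "c_dec = \<beta> / real m - \<rho> + \<rho> / (2 * real m)"

definition lyap :: "real^'n \<Rightarrow> real^'q \<Rightarrow> real" where
  "lyap x lam = lagr_gap x + prox_dist x / 2 + c_res * (norm (res x))\<^sup>2
     + c_dual * (norm (lam - lams))\<^sup>2 - c_cross * ((lam - lams) \<bullet> res x)"

definition lyap_decrease :: "real^'n \<Rightarrow> real" where
  "lyap_decrease x = lagr_gap x / real m + c_dec * (norm (res x))\<^sup>2"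

lemma real_m_pos: "real m > 0"
  using m_pos by simp

lemma m_rho_le_beta: "real m * \<rho> \<le> \<beta>"
  using rho_le real_m_pos by (simp add: field_simps)

lemma c_dec_pos: "c_dec > 0"
proof -
  have "c_dec = (2 * \<beta> - \<rho> * (2 * real m - 1)) / (2 * real m)"
    using real_m_pos unfolding c_dec_def by (simp add: field_simps)
  moreover have "\<rho> * (2 * real m - 1) < 2 * \<beta>"
    using m_rho_le_beta rho_pos by (simp add: algebra_simps)
  ultimately show ?thesis using real_m_pos by simp
qed

lemma lyap_coefficients:
  "1 - 2 * c_dual * \<rho> - c_cross = 0"
  "- \<beta> / 2 + c_res + c_dual * \<rho>\<^sup>2 + c_cross * \<rho> = 0"
  using real_m_pos rho_pos unfolding c_dual_def c_cross_def c_res_def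
  by (simp_all add: field_simps power2_eq_square)

text \<open>The dual part of the Lyapunov function is a nonnegative quadratic form in
  (norm r, norm u) exactly because its discriminant is (\<beta> - m \<rho>) / (m \<rho>) \<ge> 0.\<close>

lemma lyap_dual_part_nonneg: "c_res * (norm r)\<^sup>2 + c_dual * (norm u)\<^sup>2 - c_cross * (u \<bullet> r) \<ge> 0"
proof -
  define R where "R = norm r"
  define N where "N = norm u"
  have c_dual_pos: "c_dual > 0" using real_m_pos rho_pos by (simp add: c_dual_def)
  have "c_cross \<ge> 0" using real_m_pos m_pos by (simp add: c_cross_def field_simps)
  then have cross: "c_cross * (u \<bullet> r) \<le> c_cross * (N * R)"
    unfolding N_def R_def by (intro mult_left_mono norm_cauchy_schwarz)
  have "4 * c_dual * c_res - c_cross\<^sup>2 = (\<beta> - real m * \<rho>) / (real m * \<rho>)"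
    using real_m_pos rho_pos unfolding c_dual_def c_res_def c_cross_def
    by (simp add: field_simps power2_eq_square)
  then have "4 * c_dual * c_res - c_cross\<^sup>2 \<ge> 0"
    using m_rho_le_beta real_m_pos rho_pos by simp
  moreover have "4 * c_dual * (c_res * R\<^sup>2 + c_dual * N\<^sup>2 - c_cross * (N * R))
      = (2 * c_dual * N - c_cross * R)\<^sup>2 + (4 * c_dual * c_res - c_cross\<^sup>2) * R\<^sup>2"
    by (simp add: algebra_simps power2_eq_square)
  ultimately have "0 \<le> 4 * c_dual * (c_res * R\<^sup>2 + c_dual * N\<^sup>2 - c_cross * (N * R))"
    by simp
  then have "c_res * R\<^sup>2 + c_dual * N\<^sup>2 - c_cross * (N * R) \<ge> 0"
    using c_dual_pos by (simp add: zero_le_mult_iff)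
  with cross show ?thesis unfolding R_def N_def by linarith
qed

lemma lyap_nonneg: "in_dom x \<Longrightarrow> lyap x lam \<ge> 0"
  using lagr_gap_nonneg[of x] prox_dist_nonneg[of x] lyap_dual_part_nonneg[of "res x" "lam - lams"]
  unfolding lyap_def by simp

lemma lyap_decrease_nonneg: "in_dom x \<Longrightarrow> lyap_decrease x \<ge> 0"
  using lagr_gap_nonneg[of x] c_dec_pos real_m_pos unfolding lyap_decrease_def by simp

lemma sum_blocks_linearization_le:
  "(\<Sum>i<m. gf x \<bullet> U i (xs - x) + g_val i xs - g_val i x) \<le> F_val xs - F_val x"
proof -
  have "(\<Sum>i<m. gf x \<bullet> U i (xs - x)) = gf x \<bullet> (xs - x)"
    by (simp add: inner_sum_right[symmetric] sum_blockU[OF blk_range])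
  also have "\<dots> \<le> f xs - f x"
    using convex_gradient_inequality[OF f_convex, of gf x xs] f_grad by simp
  finally show ?thesis by (simp add: sum.distrib sum_subtractf F_val_def)
qed

lemma sum_blocks_res: "(\<Sum>i<m. A *v U i (x - xs)) = res x"
  by (simp add: linear_sum[OF matrix_vector_mul_linear, symmetric] sum_blockU[OF blk_range]
      res_def matrix_vector_mult_diff_distrib sol_feas)

lemma lyap_block_update:
  assumes i: "i < m" and upd: "is_block_update x lam i x'"
  shows "lyap x' (lam - \<rho> *\<^sub>R res x')
     \<le> F_val x - F_val xs + prox_dist x / 2 + (gf x \<bullet> U i (xs - x) + g_val i xs - g_val i x)
     + (lam - \<beta> *\<^sub>R res x) \<bullet> (A *v U i (x - xs)) - lams \<bullet> res x - (lam - lams) \<bullet> res x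
     + \<beta> / 2 * (norm (res x))\<^sup>2 + c_dual * (norm (lam - lams))\<^sup>2"
proof -
  define u where "u = lam - lams"
  define r where "r = res x"
  define t where "t = res x'"
  have e1: "lam - \<rho> *\<^sub>R t - lams = u - \<rho> *\<^sub>R t" by (simp add: u_def algebra_simps)
  have e2: "(lam - \<beta> *\<^sub>R r) \<bullet> (t - r) = (u - \<beta> *\<^sub>R r) \<bullet> (t - r) + lams \<bullet> t - lams \<bullet> r"
    by (simp add: u_def algebra_simps)
  have "lyap x' (lam - \<rho> *\<^sub>R t) = F_val x' - F_val xs - lams \<bullet> t + prox_dist x' / 2
     + c_res * (norm t)\<^sup>2 + c_dual * (norm (u - \<rho> *\<^sub>R t))\<^sup>2 - c_cross * ((u - \<rho> *\<^sub>R t) \<bullet> t)"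
    unfolding lyap_def lagr_gap_def t_def[symmetric] e1 by simp
  then show ?thesis
    using F_val_block_update[OF i upd] lyapunov_dual_identity[OF lyap_coefficients, of u r t] e2
    unfolding t_def[symmetric] r_def[symmetric] u_def[symmetric] by argo
qed

lemma lyap_expected_decrease:
  assumes "\<forall>i<m. is_block_update x lam i (X i)"
  shows "(\<Sum>i<m. lyap (X i) (lam - \<rho> *\<^sub>R res (X i))) \<le> real m * (lyap x lam - lyap_decrease x)"
proof -
  define C where "C = F_val x - F_val xs + prox_dist x / 2 - lams \<bullet> res x - (lam - lams) \<bullet> res x
     + \<beta> / 2 * (norm (res x))\<^sup>2 + c_dual * (norm (lam - lams))\<^sup>2"
  define a where "a i = gf x \<bullet> U i (xs - x) + g_val i xs - g_val i x" for i
  define e where "e i = (lam - \<beta> *\<^sub>R res x) \<bullet> (A *v U i (x - xs))" for i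
  have "(\<Sum>i<m. lyap (X i) (lam - \<rho> *\<^sub>R res (X i))) \<le> (\<Sum>i<m. C + a i + e i)"
    by (intro sum_mono) (use lyap_block_update assms in \<open>force simp: C_def a_def e_def\<close>)
  also have "\<dots> = real m * C + (\<Sum>i<m. a i) + (\<Sum>i<m. e i)" by (simp add: sum.distrib)
  also have "(\<Sum>i<m. e i) = (lam - \<beta> *\<^sub>R res x) \<bullet> res x"
    by (simp add: e_def inner_sum_right[symmetric] sum_blocks_res)
  also have "(\<Sum>i<m. a i) \<le> F_val xs - F_val x"
    unfolding a_def by (rule sum_blocks_linearization_le)
  also have "real m * C + (F_val xs - F_val x) + (lam - \<beta> *\<^sub>R res x) \<bullet> res x
      = real m * (lyap x lam - lyap_decrease x)"
    using real_m_pos unfolding C_def lyap_def lyap_decrease_def lagr_gap_def c_res_def c_cross_def c_dec_def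
    by (simp add: field_simps inner_diff_left power2_norm_eq_inner)
  finally show ?thesis by simp
qed

lemma res_event_controlled:
  assumes "\<epsilon> > 0"
  shows "\<exists>K\<ge>0. \<forall>x. in_dom x \<longrightarrow> \<epsilon> < norm (res x) \<longrightarrow> 1 \<le> K * lyap_decrease x"
proof (intro exI conjI allI impI)
  show "0 \<le> 1 / (c_dec * \<epsilon>\<^sup>2)" using c_dec_pos by simp
  fix x assume dom: "in_dom x" and big: "\<epsilon> < norm (res x)"
  have "c_dec * \<epsilon>\<^sup>2 < c_dec * (norm (res x))\<^sup>2"
    using big assms c_dec_pos by (simp add: power_strict_mono)
  also have "\<dots> \<le> lyap_decrease x"
    using lagr_gap_nonneg[OF dom] real_m_pos unfolding lyap_decrease_def by simp
  finally show "1 \<le> 1 / (c_dec * \<epsilon>\<^sup>2) * lyap_decrease x"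
    using c_dec_pos assms by (simp add: field_simps)
qed

text \<open>Since F x - F x* = gap x + \<langle>\<lambda>*, r\<rangle>, a large deviation of F forces either a large
  Lagrangian gap or a residual larger than \<theta>.\<close>

lemma objF_event_controlled:
  assumes e: "\<epsilon> > 0"
  shows "\<exists>K\<ge>0. \<forall>x. in_dom x \<longrightarrow> ereal \<epsilon> < \<bar>objF m f g x - objF m f g xs\<bar> \<longrightarrow> 1 \<le> K * lyap_decrease x"
proof -
  define \<theta> where "\<theta> = \<epsilon> / (2 * (norm lams + 1))"
  have \<theta>: "\<theta> > 0"
    using e unfolding \<theta>_def by (smt (verit) divide_pos_pos norm_ge_zero)
  obtain K2 where K2: "K2 \<ge> 0" "\<And>x. in_dom x \<Longrightarrow> \<theta> < norm (res x) \<Longrightarrow> 1 \<le> K2 * lyap_decrease x"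
    using res_event_controlled[OF \<theta>] by blast
  define K1 where "K1 = 2 * real m / \<epsilon>"
  have K1: "K1 \<ge> 0" using e by (simp add: K1_def)
  show ?thesis
  proof (intro exI conjI allI impI)
    show "0 \<le> K1 + K2" using K1 K2 by simp
    fix x assume dom: "in_dom x" and big: "ereal \<epsilon> < \<bar>objF m f g x - objF m f g xs\<bar>"
    have gap: "lagr_gap x \<ge> 0" by (rule lagr_gap_nonneg[OF dom])
    have "\<epsilon> < \<bar>lagr_gap x + lams \<bullet> res x\<bar>"
      using big objF_in_dom[OF dom] objF_in_dom[OF in_dom_solution] by (simp add: lagr_gap_def)
    moreover have "\<bar>lams \<bullet> res x\<bar> \<le> norm lams * norm (res x)" by (rule Cauchy_Schwarz_ineq2)
    ultimately consider "\<epsilon> / 2 < lagr_gap x" | "\<epsilon> / 2 < norm lams * norm (res x)"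
      using gap by linarith
    then have "1 \<le> K1 * lyap_decrease x \<or> 1 \<le> K2 * lyap_decrease x"
    proof cases
      case 1
      have "1 < K1 * (lagr_gap x / real m)" using 1 e real_m_pos by (simp add: K1_def field_simps)
      also have "\<dots> \<le> K1 * lyap_decrease x"
        using K1 c_dec_pos by (intro mult_left_mono) (simp_all add: lyap_decrease_def)
      finally show ?thesis by simp
    next
      case 2
      have "\<epsilon> / 2 < norm lams * norm (res x) + norm (res x)"
        using 2 norm_ge_zero[of "res x"] by linarith
      then have "\<epsilon> / 2 < (norm lams + 1) * norm (res x)"
        by (simp add: distrib_right)
      then have "\<theta> < norm (res x)"
        by (simp add: \<theta>_def field_simps add_pos_nonneg)
      then show ?thesis using K2 dom by blast
    qed
    moreover have "0 \<le> K1 * lyap_decrease x" "0 \<le> K2 * lyap_decrease x"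
      using K1 K2 lyap_decrease_nonneg[OF dom] by simp_all
    ultimately show "1 \<le> (K1 + K2) * lyap_decrease x" by (auto simp: distrib_right)
  qed
qed

end

section \<open>Averages over index sequences\<close>

definition index_seqs :: "nat \<Rightarrow> nat \<Rightarrow> nat list set" where
  "index_seqs m k = {q. set q \<subseteq> {..<m} \<and> length q = k}"

lemma finite_index_seqs: "finite (index_seqs m k)"
  unfolding index_seqs_def by (rule finite_lists_length_eq) simp

lemma card_index_seqs: "card (index_seqs m k) = m ^ k"
  unfolding index_seqs_def by (subst card_lists_length_eq) simp_all

lemma index_seqs_0: "index_seqs m 0 = {[]}"
  by (auto simp: index_seqs_def)

lemma index_seqs_Suc: "index_seqs m (Suc k) = (\<lambda>(q, i). i # q) ` (index_seqs m k \<times> {..<m})"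
  unfolding index_seqs_def by (rule lists_length_Suc_eq)

lemma card_index_seqs_missing: "card {q \<in> index_seqs m k. \<not> {..<m} \<subseteq> set q} \<le> m * (m - 1) ^ k"
proof -
  have "{q \<in> index_seqs m k. \<not> {..<m} \<subseteq> set q} \<subseteq> (\<Union>j<m. {q. set q \<subseteq> {..<m} - {j} \<and> length q = k})"
    by (auto simp: index_seqs_def)
  then have "card {q \<in> index_seqs m k. \<not> {..<m} \<subseteq> set q}
      \<le> card (\<Union>j<m. {q. set q \<subseteq> {..<m} - {j} \<and> length q = k})"
    by (rule card_mono[rotated]) (auto intro: finite_lists_length_eq)
  also have "\<dots> \<le> (\<Sum>j<m. card {q. set q \<subseteq> {..<m} - {j} \<and> length q = k})"
    by (rule card_UN_le) simp
  also have "\<dots> = (\<Sum>j<m. (m - 1) ^ k)"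
    by (intro sum.cong refl) (simp add: card_lists_length_eq)
  finally show ?thesis by simp
qed

lemma missing_fraction_tendsto_zero:
  assumes "m > 0"
  shows "(\<lambda>k. real (card {q \<in> index_seqs m k. \<not> {..<m} \<subseteq> set q}) / real m ^ k) \<longlonglongrightarrow> 0"
proof (rule tendsto_sandwich[OF _ _ tendsto_const])
  have "(\<lambda>k. real m * ((real m - 1) / real m) ^ k) \<longlonglongrightarrow> real m * 0"
    using assms by (intro tendsto_mult tendsto_const LIMSEQ_power_zero) (simp add: field_simps)
  then show "(\<lambda>k. real m * ((real m - 1) / real m) ^ k) \<longlonglongrightarrow> 0" by simp
  have "real (m - 1) = real m - 1" using assms by (simp add: of_nat_diff)
  then have "real (card {q \<in> index_seqs m k. \<not> {..<m} \<subseteq> set q}) \<le> real m * (real m - 1) ^ k" for k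
    using card_index_seqs_missing[of m k] by (metis of_nat_le_iff of_nat_mult of_nat_power)
  then show "\<forall>\<^sub>F k in sequentially.
      real (card {q \<in> index_seqs m k. \<not> {..<m} \<subseteq> set q}) / real m ^ k \<le> real m * ((real m - 1) / real m) ^ k"
    using assms by (auto simp: power_divide divide_right_mono)
qed auto

context block_primal_dual begin

definition update :: "real^'n \<Rightarrow> real^'q \<Rightarrow> nat \<Rightarrow> real^'n" where
  "update x lam i = (THE x'. is_block_update x lam i x')"

definition pd_step :: "(real^'n) \<times> (real^'q) \<Rightarrow> nat \<Rightarrow> (real^'n) \<times> (real^'q)" where
  "pd_step s i = (update (fst s) (snd s) i, snd s - \<rho> *\<^sub>R res (update (fst s) (snd s) i))"

text \<open>The index list is read from right to left: its head is the most recent block.\<close>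

primrec pd_run :: "(real^'n) \<times> (real^'q) \<Rightarrow> nat list \<Rightarrow> (real^'n) \<times> (real^'q)" where
  "pd_run s [] = s"
| "pd_run s (i # q) = pd_step (pd_run s q) i"

text \<open>The expectation of h after k steps from s when the blocks are drawn independently and
  uniformly: an average over all index sequences of length k.\<close>

definition avg :: "(real^'n) \<times> (real^'q) \<Rightarrow> nat \<Rightarrow> ((real^'n) \<times> (real^'q) \<Rightarrow> real) \<Rightarrow> real" where
  "avg s k h = (\<Sum>q\<in>index_seqs m k. h (pd_run s q)) / real m ^ k"

lemma pd_run_append: "pd_run s (q @ p) = pd_run (pd_run s p) q"
  by (induction q) simp_all

lemma avg_0: "avg s 0 h = h s"
  by (simp add: avg_def index_seqs_0)

lemma avg_Suc: "avg s (Suc k) h = avg s k (\<lambda>t. (\<Sum>i<m. h (pd_step t i)) / real m)"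
proof -
  have "(\<Sum>q\<in>index_seqs m (Suc k). h (pd_run s q))
      = (\<Sum>(q, i)\<in>index_seqs m k \<times> {..<m}. h (pd_step (pd_run s q) i))"
    unfolding index_seqs_Suc by (subst sum.reindex) (auto simp: inj_on_def case_prod_unfold)
  also have "\<dots> = (\<Sum>q\<in>index_seqs m k. \<Sum>i<m. h (pd_step (pd_run s q) i))"
    by (rule sum.cartesian_product[symmetric])
  finally show ?thesis using real_m_pos
    by (simp add: avg_def sum_divide_distrib[symmetric] field_simps)
qed

lemma avg_add: "avg s (a + k) h = avg s k (\<lambda>t. avg t a h)"
proof (induction a arbitrary: h)
  case 0
  then show ?case by (simp add: avg_0)
next
  case (Suc a)
  then show ?case by (simp add: avg_Suc)
qed

lemma avg_mono:
  "(\<And>q. q \<in> index_seqs m k \<Longrightarrow> h1 (pd_run s q) \<le> h2 (pd_run s q)) \<Longrightarrow> avg s k h1 \<le> avg s k h2"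
  unfolding avg_def by (intro divide_right_mono sum_mono) auto

lemma avg_diff: "avg s k (\<lambda>t. h1 t - h2 t) = avg s k h1 - avg s k h2"
  unfolding avg_def by (simp add: sum_subtractf diff_divide_distrib)

lemma avg_cmult: "avg s k (\<lambda>t. c * h t) = c * avg s k h"
  unfolding avg_def by (simp add: sum_distrib_left)

lemma avg_nonneg: "(\<And>q. q \<in> index_seqs m k \<Longrightarrow> 0 \<le> h (pd_run s q)) \<Longrightarrow> 0 \<le> avg s k h"
  unfolding avg_def by (intro divide_nonneg_nonneg sum_nonneg) auto

lemma avg_le_one: "(\<And>q. q \<in> index_seqs m k \<Longrightarrow> h (pd_run s q) \<le> 1) \<Longrightarrow> avg s k h \<le> 1"
proof -
  assume "\<And>q. q \<in> index_seqs m k \<Longrightarrow> h (pd_run s q) \<le> 1"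
  then have "(\<Sum>q\<in>index_seqs m k. h (pd_run s q)) \<le> real m ^ k"
    using sum_mono[of "index_seqs m k" "\<lambda>q. h (pd_run s q)" "\<lambda>_. 1"] by (simp add: card_index_seqs)
  then show ?thesis using real_m_pos unfolding avg_def by simp
qed

end

locale block_primal_dual_run = block_primal_dual m blk f gf g A b L \<beta> \<rho> P xs lams
  for m and blk :: "'n::finite \<Rightarrow> nat" and f gf g and A :: "real^'n^'q::finite" and b L \<beta> \<rho> P xs lams +
  fixes s0 :: "(real^'n) \<times> (real^'q)"
  assumes run_updates: "\<And>q i. set q \<subseteq> {..<m} \<Longrightarrow> i < m \<Longrightarrow>
    is_block_update (fst (pd_run s0 q)) (snd (pd_run s0 q)) i (fst (pd_run s0 (i # q)))"
begin

lemma in_dom_pd_run: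
  assumes "set p \<subseteq> {..<m}" "in_dom (fst (pd_run s0 p))" "set q \<subseteq> {..<m}"
  shows "in_dom (fst (pd_run s0 (q @ p)))"
  using assms
proof (induction q)
  case (Cons i q)
  then show ?case using run_updates block_update_in_dom by (metis append_Cons insert_subset list.set(2) lessThan_iff set_append le_sup_iff)
qed simp

lemma g_finite_pd_run:
  assumes "set q \<subseteq> {..<m}" "j \<in> set q"
  shows "g j (fst (pd_run s0 q)) \<noteq> \<infinity>"
  using assms
proof (induction q)
  case (Cons i q)
  then have i: "i < m" and q: "set q \<subseteq> {..<m}" and j: "j < m" by auto
  note upd = run_updates[OF q i]
  show ?case
  proof (cases "j = i")
    case True
    then show ?thesis using block_update_g_finite[OF i upd] by simp
  next
    case False
    then have "g j (fst (pd_run s0 q)) \<noteq> \<infinity>" using Cons q by simp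
    then show ?thesis using block_update_other[OF upd False] g_blockU[OF j] by (metis pd_run.simps(2))
  qed
qed simp

lemma in_dom_pd_run_all_blocks: "set q \<subseteq> {..<m} \<Longrightarrow> {..<m} \<subseteq> set q \<Longrightarrow> in_dom (fst (pd_run s0 q))"
  using g_finite_pd_run by (auto simp: in_dom_def)

lemma reachable_from_dom:
  assumes "set p \<subseteq> {..<m}" "in_dom (fst (pd_run s0 p))" "q \<in> index_seqs m k"
  shows "in_dom (fst (pd_run (pd_run s0 p) q))"
  using in_dom_pd_run[OF assms(1,2), of q] assms(3) by (simp add: index_seqs_def pd_run_append)

lemma avg_lyap_step:
  assumes q: "set q \<subseteq> {..<m}"
  shows "(\<Sum>i<m. case_prod lyap (pd_step (pd_run s0 q) i)) / real m
     \<le> case_prod lyap (pd_run s0 q) - lyap_decrease (fst (pd_run s0 q))"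
proof -
  define t where "t = pd_run s0 q"
  have "(\<Sum>i<m. case_prod lyap (pd_step t i))
      = (\<Sum>i<m. lyap (fst (pd_step t i)) (snd t - \<rho> *\<^sub>R res (fst (pd_step t i))))"
    by (simp add: pd_step_def case_prod_unfold)
  also have "\<dots> \<le> real m * (lyap (fst t) (snd t) - lyap_decrease (fst t))"
    using run_updates[OF q] by (intro lyap_expected_decrease) (simp add: t_def)
  finally show ?thesis using real_m_pos unfolding t_def by (simp add: field_simps case_prod_unfold)
qed

lemma lyap_telescoped:
  assumes p: "set p \<subseteq> {..<m}"
  shows "avg (pd_run s0 p) K (case_prod lyap) + (\<Sum>k<K. avg (pd_run s0 p) k (lyap_decrease \<circ> fst))
     \<le> case_prod lyap (pd_run s0 p)"
proof (induction K)
  case 0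
  then show ?case by (simp add: avg_0)
next
  case (Suc K)
  have "avg (pd_run s0 p) (Suc K) (case_prod lyap)
      \<le> avg (pd_run s0 p) K (\<lambda>t. case_prod lyap t - (lyap_decrease \<circ> fst) t)"
    unfolding avg_Suc
  proof (rule avg_mono)
    fix q assume "q \<in> index_seqs m K"
    then show "(\<Sum>i<m. case_prod lyap (pd_step (pd_run (pd_run s0 p) q) i)) / real m
        \<le> case_prod lyap (pd_run (pd_run s0 p) q) - (lyap_decrease \<circ> fst) (pd_run (pd_run s0 p) q)"
      using avg_lyap_step[of "q @ p"] p by (simp add: index_seqs_def pd_run_append)
  qed
  then show ?case using Suc.IH by (simp add: avg_diff)
qed

lemma avg_lyap_decrease_tendsto_zero:
  assumes p: "set p \<subseteq> {..<m}" and dom: "in_dom (fst (pd_run s0 p))"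
  shows "(\<lambda>k. avg (pd_run s0 p) k (lyap_decrease \<circ> fst)) \<longlonglongrightarrow> 0"
proof (rule summable_LIMSEQ_zero, rule summableI_nonneg_bounded)
  show nonneg: "0 \<le> avg (pd_run s0 p) k (lyap_decrease \<circ> fst)" for k
    using reachable_from_dom[OF p dom] lyap_decrease_nonneg by (auto intro: avg_nonneg)
  fix K
  have "0 \<le> avg (pd_run s0 p) K (case_prod lyap)"
    using reachable_from_dom[OF p dom] lyap_nonneg by (auto intro!: avg_nonneg simp: case_prod_unfold)
  then show "(\<Sum>k<K. avg (pd_run s0 p) k (lyap_decrease \<circ> fst)) \<le> case_prod lyap (pd_run s0 p)"
    using lyap_telescoped[OF p, of K] by linarith
qed

lemma avg_event_tendsto_zero_from_dom:
  assumes p: "set p \<subseteq> {..<m}" and dom: "in_dom (fst (pd_run s0 p))" and K: "K \<ge> 0"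
    and bound: "\<And>x. in_dom x \<Longrightarrow> B x \<Longrightarrow> 1 \<le> K * lyap_decrease x"
  shows "(\<lambda>n. avg (pd_run s0 p) n (\<lambda>t. of_bool (B (fst t)))) \<longlonglongrightarrow> 0"
proof (rule tendsto_sandwich[OF _ _ tendsto_const])
  show "(\<lambda>n. K * avg (pd_run s0 p) n (lyap_decrease \<circ> fst)) \<longlonglongrightarrow> 0"
    using tendsto_mult_right_zero[OF avg_lyap_decrease_tendsto_zero[OF p dom], of K]
    by (simp add: mult.commute)
  have "avg (pd_run s0 p) n (\<lambda>t. of_bool (B (fst t))) \<le> avg (pd_run s0 p) n (\<lambda>t. K * lyap_decrease (fst t))" for n
    using reachable_from_dom[OF p dom] bound K lyap_decrease_nonneg by (intro avg_mono) auto
  then show "\<forall>\<^sub>F n in sequentially.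
      avg (pd_run s0 p) n (\<lambda>t. of_bool (B (fst t))) \<le> K * avg (pd_run s0 p) n (lyap_decrease \<circ> fst)"
    by (simp add: avg_cmult comp_def)
qed (intro always_eventually allI avg_nonneg; simp)

text \<open>The initial point may lie outside dom g. Once every block has been drawn the iterate is
  in the domain, and the fraction of index sequences of length K that miss a block tends to
  zero, so it suffices to restart the estimate after K steps.\<close>

lemma avg_event_tendsto_zero:
  assumes K: "K \<ge> 0" and bound: "\<And>x. in_dom x \<Longrightarrow> B x \<Longrightarrow> 1 \<le> K * lyap_decrease x"
  shows "(\<lambda>n. avg s0 n (\<lambda>t. of_bool (B (fst t)))) \<longlonglongrightarrow> 0"
proof (rule LIMSEQ_I)
  fix r :: real assume r: "0 < r"
  define ev where "ev = (\<lambda>t :: (real^'n) \<times> (real^'q). of_bool (B (fst t)) :: real)"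
  define missing where "missing k = {q \<in> index_seqs m k. \<not> {..<m} \<subseteq> set q}" for k
  obtain k0 where k0: "real (card (missing k0)) / real m ^ k0 < r / 2"
    using order_tendstoD(2)[OF missing_fraction_tendsto_zero[OF m_pos], of "r / 2"] r
    by (auto simp: eventually_sequentially missing_def)
  define good where "good = {q \<in> index_seqs m k0. {..<m} \<subseteq> set q}"
  have "(\<lambda>n. avg (pd_run s0 p) n ev) \<longlonglongrightarrow> 0" if "p \<in> good" for p
    using that avg_event_tendsto_zero_from_dom[OF _ in_dom_pd_run_all_blocks K bound, of p]
    by (simp add: good_def index_seqs_def ev_def)
  then have "(\<lambda>n. (\<Sum>p\<in>good. avg (pd_run s0 p) n ev) / real m ^ k0) \<longlonglongrightarrow> 0"
    by (intro tendsto_divide_zero tendsto_null_sum)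
  then have "\<forall>\<^sub>F n in sequentially. (\<Sum>p\<in>good. avg (pd_run s0 p) n ev) / real m ^ k0 < r / 2"
    using r by (intro order_tendstoD(2)) auto
  then obtain N where N: "\<And>n. n \<ge> N \<Longrightarrow> (\<Sum>p\<in>good. avg (pd_run s0 p) n ev) / real m ^ k0 < r / 2"
    by (auto simp: eventually_sequentially)
  have "avg s0 n ev < r" if n: "n \<ge> N + k0" for n
  proof -
    define n' where "n' = n - k0"
    have split: "index_seqs m k0 = good \<union> missing k0" "good \<inter> missing k0 = {}"
      by (auto simp: good_def missing_def)
    have "avg s0 n ev = (\<Sum>p\<in>index_seqs m k0. avg (pd_run s0 p) n' ev) / real m ^ k0"
      using avg_add[of s0 n' k0 ev] n by (simp add: n'_def avg_def)
    also have "\<dots> = (\<Sum>p\<in>good. avg (pd_run s0 p) n' ev) / real m ^ k0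
        + (\<Sum>p\<in>missing k0. avg (pd_run s0 p) n' ev) / real m ^ k0"
      unfolding split(1) add_divide_distrib[symmetric]
      using finite_index_seqs[of m k0] split by (subst sum.union_disjoint) auto
    also have "(\<Sum>p\<in>missing k0. avg (pd_run s0 p) n' ev) \<le> real (card (missing k0))"
      using sum_mono[of "missing k0" "\<lambda>p. avg (pd_run s0 p) n' ev" "\<lambda>_. 1"]
      by (simp add: avg_le_one ev_def)
    finally have "avg s0 n ev \<le> (\<Sum>p\<in>good. avg (pd_run s0 p) n' ev) / real m ^ k0
        + real (card (missing k0)) / real m ^ k0"
      by (simp add: divide_right_mono)
    moreover have "N \<le> n'" using n by (simp add: n'_def)
    ultimately show ?thesis using N[of n'] k0 by linarith
  qed
  moreover have "0 \<le> avg s0 n ev" for n by (rule avg_nonneg) (simp add: ev_def)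
  ultimately show "\<exists>no. \<forall>n\<ge>no. norm (avg s0 n (\<lambda>t. of_bool (B (fst t))) - 0) < r"
    unfolding ev_def by (metis abs_of_nonneg diff_zero real_norm_def)
qed

end

section \<open>The random iterates\<close>

definition index_history :: "(nat \<Rightarrow> 'w \<Rightarrow> nat) \<Rightarrow> nat \<Rightarrow> 'w \<Rightarrow> nat list" where
  "index_history ik k \<omega> = rev (map (\<lambda>j. ik j \<omega>) [0..<k])"

lemma index_history_0 [simp]: "index_history ik 0 \<omega> = []"
  by (simp add: index_history_def)

lemma index_history_Suc [simp]: "index_history ik (Suc k) \<omega> = ik k \<omega> # index_history ik k \<omega>"
  by (simp add: index_history_def)

lemma length_index_history [simp]: "length (index_history ik k \<omega>) = k"
  by (simp add: index_history_def)

lemma index_history_eq_iff: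
  "index_history ik k \<omega> = s \<longleftrightarrow> length s = k \<and> (\<forall>j<k. ik j \<omega> = rev s ! j)"
proof -
  have "index_history ik k \<omega> = s \<longleftrightarrow> map (\<lambda>j. ik j \<omega>) [0..<k] = rev s"
    unfolding index_history_def by (metis rev_rev_ident)
  also have "\<dots> \<longleftrightarrow> length s = k \<and> (\<forall>j<k. ik j \<omega> = rev s ! j)"
    by (auto simp: list_eq_iff_nth_eq)
  finally show ?thesis .
qed

lemma (in prob_space) prob_index_history:
  fixes ik :: "nat \<Rightarrow> 'a \<Rightarrow> nat"
  assumes meas: "\<And>k. ik k \<in> measurable M (count_space UNIV)"
    and unif: "\<And>k i. i < m \<Longrightarrow> prob {\<omega>\<in>space M. ik k \<omega> = i} = 1 / real m"
    and indep: "indep_vars (\<lambda>_. count_space UNIV) ik UNIV"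
    and s: "set s \<subseteq> {..<m}"
  shows "{\<omega>\<in>space M. index_history ik (length s) \<omega> = s} \<in> events"
    and "prob {\<omega>\<in>space M. index_history ik (length s) \<omega> = s} = (1 / real m) ^ length s"
proof -
  define k where "k = length s"
  define E where "E j = ik j -` {rev s ! j} \<inter> space M" for j
  have E_sets: "E j \<in> events" for j
    unfolding E_def using measurable_sets[OF meas, of "{rev s ! j}"] by simp
  have E_prob: "prob (E j) = 1 / real m" if "j < k" for j
  proof -
    have "rev s ! j \<in> set s" using that by (metis k_def length_rev nth_mem set_rev)
    then have "rev s ! j < m" using s by auto
    moreover have "E j = {\<omega>\<in>space M. ik j \<omega> = rev s ! j}" by (auto simp: E_def)
    ultimately show ?thesis using unif by simp
  qed
  have "{\<omega>\<in>space M. index_history ik k \<omega> = s} \<in> events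
      \<and> prob {\<omega>\<in>space M. index_history ik k \<omega> = s} = (1 / real m) ^ k"
  proof (cases "k = 0")
    case True
    then have "{\<omega>\<in>space M. index_history ik k \<omega> = s} = space M" by (auto simp: k_def)
    then show ?thesis using True by (simp add: prob_space)
  next
    case False
    have eq: "{\<omega>\<in>space M. index_history ik k \<omega> = s} = (\<Inter>j\<in>{..<k}. E j)"
      using False by (auto simp: index_history_eq_iff E_def k_def)
    have "indep_sets (\<lambda>i. {ik i -` A \<inter> space M | A. A \<in> sets (count_space UNIV)}) UNIV"
      using indep unfolding indep_vars_def2 by blast
    then have "prob (\<Inter>j\<in>{..<k}. E j) = (\<Prod>j\<in>{..<k}. prob (E j))"
      by (rule indep_setsD) (use False in \<open>auto simp: E_def\<close>)
    also have "\<dots> = (\<Prod>j\<in>{..<k}. 1 / real m)" by (rule prod.cong) (auto simp: E_prob)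
    finally have "prob (\<Inter>j\<in>{..<k}. E j) = (1 / real m) ^ k" by simp
    moreover have "(\<Inter>j\<in>{..<k}. E j) \<in> events"
      using False E_sets by (intro sets.finite_INT) auto
    ultimately show ?thesis unfolding eq by simp
  qed
  then show "{\<omega>\<in>space M. index_history ik (length s) \<omega> = s} \<in> events"
    and "prob {\<omega>\<in>space M. index_history ik (length s) \<omega> = s} = (1 / real m) ^ length s"
    by (simp_all add: k_def)
qed

locale block_primal_dual_algorithm = block_primal_dual m blk f gf g A b L \<beta> \<rho> P xs lams
  for m and blk :: "'n::finite \<Rightarrow> nat" and f gf g and A :: "real^'n^'q::finite" and b L \<beta> \<rho> P xs lams +
  fixes M :: "'w measure" and ik :: "nat \<Rightarrow> 'w \<Rightarrow> nat"
    and x :: "nat \<Rightarrow> 'w \<Rightarrow> real^'n" and r lam :: "nat \<Rightarrow> 'w \<Rightarrow> real^'q" and x0 :: "real^'n"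
  assumes M_prob: "prob_space M"
    and ik_meas: "\<forall>k. ik k \<in> measurable M (count_space UNIV)"
    and ik_range: "\<forall>k. \<forall>\<omega>\<in>space M. ik k \<omega> < m"
    and ik_unif: "\<forall>k. \<forall>i<m. measure M {\<omega>\<in>space M. ik k \<omega> = i} = 1 / real m"
    and ik_indep: "prob_space.indep_vars M (\<lambda>_. count_space UNIV) ik UNIV"
    and x_init: "\<forall>\<omega>\<in>space M. x 0 \<omega> = x0"
    and lam_init: "\<forall>\<omega>\<in>space M. lam 0 \<omega> = 0"
    and r_init: "\<forall>\<omega>\<in>space M. r 0 \<omega> = A *v x0 - b"
    and x_other: "\<forall>k. \<forall>\<omega>\<in>space M. \<forall>j. blk j \<noteq> ik k \<omega> \<longrightarrow> x (Suc k) \<omega> $ j = x k \<omega> $ j"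
    and x_argmin: "\<forall>k. \<forall>\<omega>\<in>space M. \<forall>z. blockU blk (ik k \<omega>) z = z \<longrightarrow>
        (let i = ik k \<omega>;
             c = blockU blk i (gf (x k \<omega>) - transpose A *v (lam k \<omega> - \<beta> *\<^sub>R r k \<omega>));
             obj = (\<lambda>v. ereal (c \<bullet> v) + g i v
                        + ereal (1/2 * ((v - blockU blk i (x k \<omega>)) \<bullet> (P i *v (v - blockU blk i (x k \<omega>))))))
         in obj (blockU blk i (x (Suc k) \<omega>)) \<le> obj z)"
    and r_step: "\<forall>k. \<forall>\<omega>\<in>space M.
        r (Suc k) \<omega> = r k \<omega> + A *v (blockU blk (ik k \<omega>) (x (Suc k) \<omega> - x k \<omega>))"
    and lam_step: "\<forall>k. \<forall>\<omega>\<in>space M. lam (Suc k) \<omega> = lam k \<omega> - \<rho> *\<^sub>R r (Suc k) \<omega>"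
begin

interpretation prob_space M
  by (rule M_prob)

lemma is_block_update_iterate:
  assumes "\<omega> \<in> space M" and "r k \<omega> = res (x k \<omega>)"
  shows "is_block_update (x k \<omega>) (lam k \<omega>) (ik k \<omega>) (x (Suc k) \<omega>)"
  using assms x_other bspec[OF spec[OF x_argmin, of k] assms(1)]
  by (auto simp: is_block_update_def Let_def prox_obj_def lin_coef_def)

lemma iterate_eq_pd_run:
  "\<forall>\<omega>\<in>space M. r k \<omega> = res (x k \<omega>) \<and> (x k \<omega>, lam k \<omega>) = pd_run (x0, 0) (index_history ik k \<omega>)"
proof (induction k)
  case 0
  then show ?case using x_init lam_init r_init by (simp add: res_def)
next
  case (Suc k)
  show ?case
  proof
    fix \<omega> assume \<omega>: "\<omega> \<in> space M"
    define i where "i = ik k \<omega>"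
    have i: "i < m" using ik_range \<omega> by (simp add: i_def)
    have rk: "r k \<omega> = res (x k \<omega>)" and run: "(x k \<omega>, lam k \<omega>) = pd_run (x0, 0) (index_history ik k \<omega>)"
      using Suc \<omega> by auto
    have upd: "is_block_update (x k \<omega>) (lam k \<omega>) i (x (Suc k) \<omega>)"
      using is_block_update_iterate[OF \<omega> rk] by (simp add: i_def)
    have "update (x k \<omega>) (lam k \<omega>) i = x (Suc k) \<omega>"
      unfolding update_def using upd block_update_unique[OF i upd] by blast
    moreover have r_Suc: "r (Suc k) \<omega> = res (x (Suc k) \<omega>)"
      using r_step \<omega> block_update_diff_blockU[OF upd] rk
      by (simp add: i_def res_def matrix_vector_mult_diff_distrib)
    ultimately have "pd_run (x0, 0) (index_history ik (Suc k) \<omega>) = (x (Suc k) \<omega>, lam (Suc k) \<omega>)"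
      using run[symmetric] lam_step \<omega> by (simp add: pd_step_def i_def)
    then show "r (Suc k) \<omega> = res (x (Suc k) \<omega>)
        \<and> (x (Suc k) \<omega>, lam (Suc k) \<omega>) = pd_run (x0, 0) (index_history ik (Suc k) \<omega>)"
      using r_Suc by simp
  qed
qed

lemma
  assumes "set s \<subseteq> {..<m}"
  shows index_history_event: "{\<omega>\<in>space M. index_history ik (length s) \<omega> = s} \<in> events"
    and prob_index_history_eq: "prob {\<omega>\<in>space M. index_history ik (length s) \<omega> = s} = (1 / real m) ^ length s"
  using prob_index_history[of ik m s] ik_meas ik_unif ik_indep assms by auto

lemma index_history_realised:
  assumes "set s \<subseteq> {..<m}"
  shows "\<exists>\<omega>\<in>space M. index_history ik (length s) \<omega> = s"
proof (rule ccontr)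
  assume "\<not> ?thesis"
  then have empty: "{\<omega>\<in>space M. index_history ik (length s) \<omega> = s} = {}" by auto
  have "(1 / real m) ^ length s = 0"
    using prob_index_history_eq[OF assms] unfolding empty by simp
  then show False using m_pos by simp
qed

text \<open>Every finite index sequence has positive probability, so the update relation holds along
  every run of the algorithm, not only almost surely.\<close>

lemma pd_run_updates:
  assumes q: "set q \<subseteq> {..<m}" and i: "i < m"
  shows "is_block_update (fst (pd_run (x0, 0) q)) (snd (pd_run (x0, 0) q)) i (fst (pd_run (x0, 0) (i # q)))"
proof -
  obtain \<omega> where \<omega>: "\<omega> \<in> space M" and hist: "index_history ik (Suc (length q)) \<omega> = i # q"
    using index_history_realised[of "i # q"] q i by auto
  then have "ik (length q) \<omega> = i" "index_history ik (length q) \<omega> = q" by simp_all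
  then show ?thesis
    using iterate_eq_pd_run[of "length q"] iterate_eq_pd_run[of "Suc (length q)"] \<omega> hist
      is_block_update_iterate[OF \<omega>] by (metis fst_conv snd_conv)
qed

sublocale block_primal_dual_run m blk f gf g A b L \<beta> \<rho> P xs lams "(x0, 0)"
  by unfold_locales (rule pd_run_updates)

lemma prob_iterate_event: "prob {\<omega>\<in>space M. B (x k \<omega>)} = avg (x0, 0) k (\<lambda>t. of_bool (B (fst t)))"
proof -
  define S where "S = {s \<in> index_seqs m k. B (fst (pd_run (x0, 0) s))}"
  have "finite S" using finite_index_seqs by (simp add: S_def)
  have "index_history ik k \<omega> \<in> index_seqs m k" if "\<omega> \<in> space M" for \<omega>
    using ik_range that by (auto simp: index_seqs_def index_history_def)
  then have "{\<omega>\<in>space M. B (x k \<omega>)} = (\<Union>s\<in>S. {\<omega>\<in>space M. index_history ik k \<omega> = s})"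
    using iterate_eq_pd_run[of k] by (auto simp: S_def) (metis fst_conv)+
  then have "prob {\<omega>\<in>space M. B (x k \<omega>)} = (\<Sum>s\<in>S. prob {\<omega>\<in>space M. index_history ik k \<omega> = s})"
    using index_history_event \<open>finite S\<close>
    by (simp only:) (rule finite_measure_finite_Union,
        auto simp: S_def index_seqs_def disjoint_family_on_def)
  also have "\<dots> = (\<Sum>s\<in>S. (1 / real m) ^ k)"
    using prob_index_history_eq by (intro sum.cong) (auto simp: S_def index_seqs_def)
  also have "\<dots> = (\<Sum>s\<in>index_seqs m k. of_bool (B (fst (pd_run (x0, 0) s)))) / real m ^ k"
  proof -
    have "S = index_seqs m k \<inter> {s. B (fst (pd_run (x0, 0) s))}" by (auto simp: S_def)
    then show ?thesis using finite_index_seqs[of m k] by (simp add: power_one_over)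
  qed
  finally show ?thesis by (simp add: avg_def)
qed

lemma prob_event_tendsto_zero:
  assumes "\<exists>K\<ge>0. \<forall>x. in_dom x \<longrightarrow> B x \<longrightarrow> 1 \<le> K * lyap_decrease x"
  shows "(\<lambda>k. prob {\<omega>\<in>space M. B (x k \<omega>)}) \<longlonglongrightarrow> 0"
  using assms avg_event_tendsto_zero by (auto simp: prob_iterate_event)

theorem objF_tendsto_in_prob:
  "\<epsilon> > 0 \<Longrightarrow> (\<lambda>k. prob {\<omega>\<in>space M. ereal \<epsilon> < \<bar>objF m f g (x k \<omega>) - objF m f g xs\<bar>}) \<longlonglongrightarrow> 0"
  by (rule prob_event_tendsto_zero[OF objF_event_controlled])

theorem residual_tendsto_in_prob:
  assumes "\<epsilon> > 0"
  shows "(\<lambda>k. prob {\<omega>\<in>space M. \<epsilon> < norm (r k \<omega>)}) \<longlonglongrightarrow> 0"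
proof -
  have "{\<omega>\<in>space M. \<epsilon> < norm (r k \<omega>)} = {\<omega>\<in>space M. \<epsilon> < norm (res (x k \<omega>))}" for k
    using iterate_eq_pd_run[of k] by auto
  then show ?thesis
    using prob_event_tendsto_zero[OF res_event_controlled[OF assms]] by simp
qed

end

theorem mainTheorem6:
  fixes M :: "'w measure"
    and m :: nat
    and blk :: "'n::finite \<Rightarrow> nat"
    and f :: "real^'n \<Rightarrow> real"
    and gf :: "real^'n \<Rightarrow> real^'n"
    and g :: "nat \<Rightarrow> real^'n \<Rightarrow> ereal"
    and A :: "real^'n^'q::finite"
    and b :: "real^'q"
    and L :: "nat \<Rightarrow> real" and Lr :: real
    and \<beta> \<rho> :: real
    and P :: "nat \<Rightarrow> real^'n^'n"
    and xs :: "real^'n" and lams :: "real^'q"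
    and x0 :: "real^'n"
    and ik :: "nat \<Rightarrow> 'w \<Rightarrow> nat"
    and x :: "nat \<Rightarrow> 'w \<Rightarrow> real^'n"
    and r :: "nat \<Rightarrow> 'w \<Rightarrow> real^'q"
    and lam :: "nat \<Rightarrow> 'w \<Rightarrow> real^'q"
  defines "U \<equiv> blockU blk"
  defines "F \<equiv> objF m f g"
  assumes blk_range: "\<forall>j. blk j < m"
    and blocks_nonempty: "\<forall>i<m. \<exists>j. blk j = i"
    and f_convex: "convex_on UNIV f"
    and f_grad: "\<forall>z. (f has_derivative (\<lambda>h. gf z \<bullet> h)) (at z)"
    and gf_cont: "continuous_on UNIV gf"
    and g_block: "\<forall>i<m. \<forall>z. g i z = g i (U i z)"
    and g_proper: "\<forall>i<m. ereal_proper (g i)"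
    and g_convex: "\<forall>i<m. ereal_convex (g i)"
    and g_lsc: "\<forall>i<m. ereal_lsc (g i)"
    and sol_feas: "A *v xs = b"
    and sol_opt: "\<forall>z. F xs + ereal (lams \<bullet> (A *v z - b)) \<le> F z"
    and L_pos: "\<forall>i<m. L i > 0"
    and Lip_i: "\<forall>i<m. \<forall>z y. norm (U i (gf (z + U i y)) - U i (gf z)) \<le> L i * norm (U i y)"
    and Lip_r: "\<forall>i<m. \<forall>z y. norm (gf (z + U i y) - gf z) \<le> Lr * norm (U i y)"
    and beta_pos: "\<beta> > 0"
    and rho_pos: "0 < \<rho>" and rho_le: "\<rho> \<le> \<beta> / real m"
    and P_block: "\<forall>i<m. \<forall>j l. blk j \<noteq> i \<or> blk l \<noteq> i \<longrightarrow> P i $ j $ l = 0"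
    and P_sym: "\<forall>i<m. transpose (P i) = P i"
    and P_psd: "\<forall>i<m. \<forall>y. 0 \<le> y \<bullet> (P i *v y)"
    and P_ge: "\<forall>i<m. \<forall>y. U i y = y \<longrightarrow>
                 L i * (y \<bullet> y) + \<beta> * (norm (A *v y))\<^sup>2 \<le> y \<bullet> (P i *v y)"
    and M_prob: "prob_space M"
    and ik_meas: "\<forall>k. ik k \<in> measurable M (count_space UNIV)"
    and ik_range: "\<forall>k. \<forall>\<omega>\<in>space M. ik k \<omega> < m"
    and ik_unif: "\<forall>k. \<forall>i<m. measure M {\<omega>\<in>space M. ik k \<omega> = i} = 1 / real m"
    and ik_indep: "prob_space.indep_vars M (\<lambda>_. count_space UNIV) ik UNIV"
    and x_init: "\<forall>\<omega>\<in>space M. x 0 \<omega> = x0"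
    and lam_init: "\<forall>\<omega>\<in>space M. lam 0 \<omega> = 0"
    and r_init: "\<forall>\<omega>\<in>space M. r 0 \<omega> = A *v x0 - b"
    and x_other: "\<forall>k. \<forall>\<omega>\<in>space M. \<forall>j. blk j \<noteq> ik k \<omega> \<longrightarrow> x (Suc k) \<omega> $ j = x k \<omega> $ j"
    and x_argmin: "\<forall>k. \<forall>\<omega>\<in>space M. \<forall>z. U (ik k \<omega>) z = z \<longrightarrow>
        (let i = ik k \<omega>;
             c = U i (gf (x k \<omega>) - transpose A *v (lam k \<omega> - \<beta> *\<^sub>R r k \<omega>));
             obj = (\<lambda>v. ereal (c \<bullet> v) + g i v
                        + ereal (1/2 * ((v - U i (x k \<omega>)) \<bullet> (P i *v (v - U i (x k \<omega>))))))
         in obj (U i (x (Suc k) \<omega>)) \<le> obj z)"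
    and r_step: "\<forall>k. \<forall>\<omega>\<in>space M.
        r (Suc k) \<omega> = r k \<omega> + A *v (U (ik k \<omega>) (x (Suc k) \<omega> - x k \<omega>))"
    and lam_step: "\<forall>k. \<forall>\<omega>\<in>space M. lam (Suc k) \<omega> = lam k \<omega> - \<rho> *\<^sub>R r (Suc k) \<omega>"
  shows "(\<forall>\<epsilon>>0. (\<lambda>k. measure M {\<omega>\<in>space M. ereal \<epsilon> < \<bar>F (x k \<omega>) - F xs\<bar>}) \<longlonglongrightarrow> 0)
       \<and> (\<forall>\<epsilon>>0. (\<lambda>k. measure M {\<omega>\<in>space M. \<epsilon> < norm (r k \<omega>)}) \<longlonglongrightarrow> 0)"
proof -
  interpret block_primal_dual_algorithm m blk f gf g A b L \<beta> \<rho> P xs lams M ik x r lam x0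
    using blk_range f_convex f_grad g_block g_proper g_convex sol_feas sol_opt L_pos Lip_i beta_pos
      rho_pos rho_le P_sym P_psd P_ge M_prob ik_meas ik_range ik_unif ik_indep x_init lam_init r_init
      x_other x_argmin r_step lam_step
    unfolding block_primal_dual_algorithm_def block_primal_dual_def
      block_primal_dual_algorithm_axioms_def U_def F_def
    by blast
  show ?thesis
    unfolding F_def using objF_tendsto_in_prob residual_tendsto_in_prob by blast
qed

end
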